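(* Let $\beta\in(0,1)$ and $\alpha\ge1$. Then $$\sum_{n\ge1}\frac{\alpha^{n-1}}{\Gamma(n(1-\beta))}\le\frac{\beta+1}{1-\beta}\,\alpha^{\frac{1+\beta}{1-\beta}}+\frac{\alpha^{\frac{2}{1-\beta}}\exp\!\big(\alpha^{\frac{1}{1-\beta}}\big)}{1-\beta}.$$
   Context: $\Gamma$ denotes Euler's Gamma function. *)

theory Defs
  imports "HOL-Analysis.Analysis"
begin

end

theory Submission
  imports Defs
begin

(*
  Put g = 1 - beta and x = alpha powr (1/g): the n-th term becomes x^(ng) / Gamma((n+1)g), and the
  claim reads g * sum <= (2 - g) x^(2-g) + x^2 e^x.  Let N = floor(2/g).  For n < N the power is at
  most x^(2-g), and the tangent lines of the convex function ln Gamma at 1 and 2 bound 1/Gamma on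
  (0, 2] well enough that g * sum_{n<N} 1/Gamma((n+1)g) <= 1 + (N - 1) g.  For n >= N, g times the
  n-th term is at most the decrease on [ng, (n+1)g] of the piecewise linear function P with
  P(k) = x^2 sum_{i >= k-1} x^i/i!, whose slope on [k, k+1] is -x^(k+1)/(k-1)!.  So the tail
  telescopes to at most P(Ng) = x^2 e^x - (Ng - 1) x^2, and the two parts combine because Ng >= 1.
*)

lemma Gamma_real_ge_exp_tangent:
  fixes a t :: real
  assumes "0 < a" "0 < t"
  shows "Gamma a * exp (Digamma a * (t - a)) \<le> Gamma t"
proof -
  have "((ln \<circ> Gamma) has_real_derivative Digamma a) (at a within {0<..})"
    using assms by (auto intro!: derivative_eq_intros simp: o_def Gamma_real_pos_exp)
  then have "Digamma a * (t - a) \<le> ln (Gamma t) - ln (Gamma a)"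
    using convex_on_imp_above_tangent[OF log_convex_Gamma_real] assms
    by (simp add: interior_open)
  then have "exp (Digamma a * (t - a)) \<le> exp (ln (Gamma t) - ln (Gamma a))"
    by simp
  also have "\<dots> = Gamma t / Gamma a"
    using assms by (simp add: exp_diff)
  finally show ?thesis
    using assms by (simp add: le_divide_eq mult.commute)
qed

lemma inverse_Gamma_real_le_exp_tangent:
  fixes a t :: real
  assumes "0 < a" "0 < t"
  shows "1 / Gamma t \<le> exp (- Digamma a * (t - a)) / Gamma a"
proof -
  have "1 / Gamma t \<le> 1 / (Gamma a * exp (Digamma a * (t - a)))"
    using Gamma_real_ge_exp_tangent[OF assms] assms by (intro divide_left_mono) auto
  also have "\<dots> = exp (- Digamma a * (t - a)) / Gamma a"
    by (simp add: exp_minus divide_inverse mult.commute)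
  finally show ?thesis .
qed

lemma inverse_Gamma_real_le_exp_tangent_at_1:
  fixes t :: real
  assumes "0 < t"
  shows "1 / Gamma t \<le> exp (euler_mascheroni * (t - 1))"
  using inverse_Gamma_real_le_exp_tangent[of 1 t] assms by simp

lemma inverse_Gamma_real_le_exp_tangent_at_2:
  fixes t :: real
  assumes "0 < t"
  shows "1 / Gamma t \<le> exp ((1 - euler_mascheroni) * (2 - t))"
proof -
  have Gamma_2: "Gamma (2::real) = 1" and Digamma_2: "Digamma (2::real) = 1 - euler_mascheroni"
    using Gamma_fact[of 1, where 'a = real] Digamma_plus1[of "1::real"] by simp_all
  show ?thesis
    using inverse_Gamma_real_le_exp_tangent[of 2 t] assms
    unfolding Gamma_2 Digamma_2 by (simp add: algebra_simps)
qed

lemma inverse_Gamma_real_le_1: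
  fixes t :: real
  assumes "0 < t" "t \<le> 1"
  shows "1 / Gamma t \<le> 1"
proof -
  have "euler_mascheroni * (t - 1) \<le> 0"
    using euler_mascheroni_pos assms by (intro mult_nonneg_nonpos) auto
  then show ?thesis
    using inverse_Gamma_real_le_exp_tangent_at_1[OF assms(1)] by (meson exp_le_one_iff order_trans)
qed

lemma inverse_Gamma_real_le_quadratic_at_1:
  fixes t :: real
  assumes "1 \<le> t" "t \<le> 2"
  shows "1 / Gamma t \<le> 1 + (t - 1) + (t - 1)^2"
proof -
  have "1 / Gamma t \<le> exp (euler_mascheroni * (t - 1))"
    using inverse_Gamma_real_le_exp_tangent_at_1[of t] assms by simp
  also have "\<dots> \<le> exp (t - 1)"
    using euler_mascheroni_less_13_over_22 assms mult_right_mono[of euler_mascheroni 1 "t - 1"]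
    by simp
  also have "\<dots> \<le> 1 + (t - 1) + (t - 1)^2"
    using exp_bound[of "t - 1"] assms by simp
  finally show ?thesis .
qed

lemma inverse_Gamma_real_le_quadratic_at_2:
  fixes t :: real
  assumes "0 < t" "t \<le> 2"
  shows "1 / Gamma t \<le> 1 + (2 - t) / 2 + ((2 - t) / 2)^2"
proof -
  have "1 / Gamma t \<le> exp ((1 - euler_mascheroni) * (2 - t))"
    using inverse_Gamma_real_le_exp_tangent_at_2[of t] assms by simp
  also have "\<dots> \<le> exp ((2 - t) / 2)"
    using euler_mascheroni_gt_19_over_33 assms
      mult_right_mono[of "1 - euler_mascheroni" "1/2" "2 - t"]
    by simp
  also have "\<dots> \<le> 1 + (2 - t) / 2 + ((2 - t) / 2)^2"
    using exp_bound[of "(2 - t) / 2"] assms by simp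
  finally show ?thesis .
qed

lemma inverse_Gamma_real_le_four_thirds:
  fixes t :: real
  assumes "1 \<le> t" "t \<le> 2"
  shows "1 / Gamma t \<le> 4/3"
proof -
  define A where "A = euler_mascheroni * (t - 1)"
  define B where "B = (1 - euler_mascheroni) * (2 - t)"
  have comb: "(2 - t) * A + (t - 1) * B = 1/4 - (t - 3/2)^2"
    unfolding A_def B_def by (simp add: power2_eq_square algebra_simps)
  have "min A B \<le> 1/4"
  proof (cases "A \<le> B")
    case True
    then have "A \<le> (2 - t) * A + (t - 1) * B"
      using assms mult_left_mono[of A B "t - 1"] by (simp add: algebra_simps)
    then show ?thesis
      using comb zero_le_power2[of "t - 3/2"] by linarith
  next
    case False
    then have "B \<le> (2 - t) * A + (t - 1) * B"
      using assms mult_left_mono[of B A "2 - t"] by (simp add: algebra_simps)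
    then show ?thesis
      using comb zero_le_power2[of "t - 3/2"] by linarith
  qed
  have "1 / Gamma t \<le> exp A" "1 / Gamma t \<le> exp B"
    using inverse_Gamma_real_le_exp_tangent_at_1[of t] inverse_Gamma_real_le_exp_tangent_at_2[of t] assms
    unfolding A_def B_def by auto
  then have "1 / Gamma t \<le> exp (min A B)"
    by (simp add: min_def)
  also have "\<dots> \<le> exp (1/4)"
    using \<open>min A B \<le> 1/4\<close> by simp
  also have "exp (1/4 :: real) \<le> 4/3"
    using exp_bound[of "1/4 :: real"] by (simp add: power2_eq_square)
  finally show ?thesis .
qed

lemma fact_le_Gamma_real:
  fixes t :: real
  assumes "real m + 1 \<le> t" "2 \<le> t"
  shows "fact m \<le> Gamma t"
proof -
  have "fact m \<le> (fact (max m 1) :: real)"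
    by (intro fact_mono) simp
  also have "\<dots> = Gamma (1 + real (max m 1))"
    by (rule Gamma_fact[symmetric])
  also have "\<dots> \<le> Gamma t"
    using assms Gamma_real_strict_mono[of "1 + real (max m 1)" t]
    by (cases "1 + real (max m 1) = t") (auto simp: max_def)
  finally show ?thesis .
qed

lemma nat_floor_divide_bounds:
  fixes c g :: real
  assumes "0 < g" "0 \<le> c"
  shows "real (nat \<lfloor>c / g\<rfloor>) * g \<le> c" "c < (real (nat \<lfloor>c / g\<rfloor>) + 1) * g"
proof -
  have "real (nat \<lfloor>c / g\<rfloor>) = of_int \<lfloor>c / g\<rfloor>"
    using assms by simp
  then have "real (nat \<lfloor>c / g\<rfloor>) \<le> c / g" "c / g < real (nat \<lfloor>c / g\<rfloor>) + 1"
    by linarith+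
  with assms(1) show "real (nat \<lfloor>c / g\<rfloor>) * g \<le> c" "c < (real (nat \<lfloor>c / g\<rfloor>) + 1) * g"
    by (simp_all only: pos_le_divide_eq pos_divide_less_eq)
qed

lemma inverse_Gamma_sum_two_le:
  fixes g :: real
  assumes "0 < g" "g \<le> 1"
  shows "g * (\<Sum>n<2. 1 / Gamma (real (Suc n) * g)) \<le> 1 + g"
proof -
  have "(\<Sum>n<2. 1 / Gamma (real (Suc n) * g)) = 1 / Gamma g + 1 / Gamma (2 * g)"
    by (simp add: eval_nat_numeral)
  also have "\<dots> \<le> 1 + (1 + (2 - 2 * g) / 2 + ((2 - 2 * g) / 2)^2)"
    using inverse_Gamma_real_le_1[of g] inverse_Gamma_real_le_quadratic_at_2[of "2 * g"] assms
    by (intro add_mono) auto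
  finally have "g * (\<Sum>n<2. 1 / Gamma (real (Suc n) * g))
      \<le> g * (1 + (1 + (2 - 2 * g) / 2 + ((2 - 2 * g) / 2)^2))"
    using assms by (intro mult_left_mono) auto
  also have "\<dots> = 1 + g - (1 - g)^3"
    by (simp add: power2_eq_square power3_eq_cube field_simps)
  also have "\<dots> \<le> 1 + g"
    using assms by simp
  finally show ?thesis .
qed

lemma inverse_Gamma_sum_three_le:
  fixes g :: real
  assumes "1/2 \<le> g" "g \<le> 2/3"
  shows "g * (\<Sum>n<3. 1 / Gamma (real (Suc n) * g)) \<le> 1 + 2 * g"
proof -
  have "(\<Sum>n<3. 1 / Gamma (real (Suc n) * g)) = 1 / Gamma g + 1 / Gamma (2 * g) + 1 / Gamma (3 * g)"
    by (simp add: eval_nat_numeral)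
  also have "\<dots> \<le> 1 + (1 + (2 * g - 1) + (2 * g - 1)^2) + (1 + (2 - 3 * g) / 2 + ((2 - 3 * g) / 2)^2)"
    using inverse_Gamma_real_le_1[of g] inverse_Gamma_real_le_quadratic_at_1[of "2 * g"]
      inverse_Gamma_real_le_quadratic_at_2[of "3 * g"] assms
    by (intro add_mono) auto
  finally have "g * (\<Sum>n<3. 1 / Gamma (real (Suc n) * g))
      \<le> g * (1 + (1 + (2 * g - 1) + (2 * g - 1)^2) + (1 + (2 - 3 * g) / 2 + ((2 - 3 * g) / 2)^2))"
    using assms by (intro mult_left_mono) auto
  also have "\<dots> = 5 * g - 13/2 * g^2 + 25/4 * g^3"
    by (simp add: power2_eq_square power3_eq_cube field_simps)
  also have "\<dots> \<le> 1 + 2 * g"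
  proof -
    \<comment> \<open>On \<open>[1/2, 2/3]\<close>, \<open>g^3 \<le> 2/3 * g^2\<close> reduces the cubic to a quadratic without real roots.\<close>
    have "g * g^2 \<le> 2/3 * g^2"
      using assms by (intro mult_right_mono) auto
    moreover have "0 \<le> (g - 9/14)^2"
      by simp
    ultimately show ?thesis
      by (simp add: power2_eq_square power3_eq_cube algebra_simps)
  qed
  finally show ?thesis .
qed

lemma inverse_Gamma_sum_le_small:
  fixes g :: real
  assumes "0 < g" "g \<le> 1/2" "real N * g \<le> 2"
  shows "g * (\<Sum>n<N. 1 / Gamma (real (Suc n) * g)) \<le> 1 + (real N - 1) * g"
proof -
  define M where "M = nat \<lfloor>1 / g\<rfloor>"
  have M: "real M * g \<le> 1" "1 < (real M + 1) * g"
    using nat_floor_divide_bounds[of g 1] assms unfolding M_def by auto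
  have "1 / Gamma (real (Suc n) * g) \<le> (if M \<le> n then 4/3 else 1)" if "n < N" for n
  proof (cases "M \<le> n")
    case True
    then have "(real M + 1) * g \<le> real (Suc n) * g" "real (Suc n) * g \<le> real N * g"
      using that assms by (auto intro!: mult_right_mono)
    then have "1 / Gamma (real (Suc n) * g) \<le> 4/3"
      using M assms by (intro inverse_Gamma_real_le_four_thirds) linarith+
    then show ?thesis
      using True by simp
  next
    case False
    then have "real (Suc n) * g \<le> real M * g"
      using assms by (auto intro!: mult_right_mono)
    then have "real (Suc n) * g \<le> 1"
      using M by linarith
    then have "1 / Gamma (real (Suc n) * g) \<le> 1"
      using assms by (intro inverse_Gamma_real_le_1) auto
    then show ?thesis
      using False by simp
  qed
  then have "(\<Sum>n<N. 1 / Gamma (real (Suc n) * g)) \<le> (\<Sum>n<N. if M \<le> n then 4/3 else 1)"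
    by (intro sum_mono) auto
  also have "\<dots> = real N + real (N - M) / 3"
    by (induction N) (auto simp: Suc_diff_le add_divide_distrib)
  finally have "g * (\<Sum>n<N. 1 / Gamma (real (Suc n) * g)) \<le> g * (real N + real (N - M) / 3)"
    using assms by (intro mult_left_mono) auto
  moreover have "g * real (N - M) \<le> 3 * (1 - g)"
  proof (cases "M \<le> N")
    case True
    then show ?thesis
      using M assms by (simp add: of_nat_diff algebra_simps)
  qed (use assms in simp)
  ultimately show ?thesis
    by (simp add: algebra_simps)
qed

lemma inverse_Gamma_sum_le:
  fixes g :: real
  assumes "0 < g" "g < 1"
  defines "N \<equiv> nat \<lfloor>2 / g\<rfloor>"
  shows "g * (\<Sum>n<N. 1 / Gamma (real (Suc n) * g)) \<le> 1 + (real N - 1) * g"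
proof -
  consider "g \<le> 1/2" | "1/2 < g" "g \<le> 2/3" | "2/3 < g"
    by linarith
  then show ?thesis
  proof cases
    case 1
    moreover have "real N * g \<le> 2"
      using nat_floor_divide_bounds(1)[of g 2] assms(1) unfolding N_def by simp
    ultimately show ?thesis
      using inverse_Gamma_sum_le_small assms(1) by blast
  next
    case 2
    then have "\<lfloor>2 / g\<rfloor> = 3"
      by (simp add: floor_eq_iff field_simps)
    then show ?thesis
      using inverse_Gamma_sum_three_le[of g] 2 unfolding N_def by simp
  next
    case 3
    then have "\<lfloor>2 / g\<rfloor> = 2"
      using assms(2) by (simp add: floor_eq_iff field_simps)
    then show ?thesis
      using inverse_Gamma_sum_two_le[of g] assms(1,2) unfolding N_def by simp
  qed
qed

definition lin_interp :: "(nat \<Rightarrow> real) \<Rightarrow> real \<Rightarrow> real" where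
  "lin_interp F t = F (nat \<lfloor>t\<rfloor>) + frac t * (F (Suc (nat \<lfloor>t\<rfloor>)) - F (nat \<lfloor>t\<rfloor>))"

lemma lin_interp_eq:
  assumes "real m \<le> t" "t \<le> real m + 1"
  shows "lin_interp F t = F m + (t - real m) * (F (Suc m) - F m)"
proof (cases "t = real m + 1")
  case True
  then have floor: "\<lfloor>t\<rfloor> = int (Suc m)" and frac: "frac t = 0"
    by (simp_all add: frac_def)
  have "lin_interp F t = F (Suc m)"
    unfolding lin_interp_def floor frac nat_int by simp
  then show ?thesis
    using True by simp
next
  case False
  then have "\<lfloor>t\<rfloor> = int m"
    using assms by (simp add: floor_eq_iff)
  then show ?thesis
    by (simp add: lin_interp_def frac_def)
qed

lemma lin_interp_nonneg:
  assumes "0 \<le> t" "\<And>m. 0 \<le> F m"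
  shows "0 \<le> lin_interp F t"
proof -
  define m where "m = nat \<lfloor>t\<rfloor>"
  have "real m \<le> t" "t \<le> real m + 1"
    using assms(1) unfolding m_def by linarith+
  then have "lin_interp F t = (1 - (t - real m)) * F m + (t - real m) * F (Suc m)"
    by (simp add: lin_interp_eq algebra_simps)
  also have "\<dots> \<ge> 0"
    using \<open>real m \<le> t\<close> \<open>t \<le> real m + 1\<close> assms(2) by (intro add_nonneg_nonneg mult_nonneg_nonneg) auto
  finally show ?thesis .
qed

lemma lin_interp_diff_ge:
  assumes "0 \<le> s" "s \<le> t" "t \<le> s + 1"
    and slope: "\<And>m. real m \<le> t \<Longrightarrow> s \<le> real m + 1 \<Longrightarrow> c \<le> F m - F (Suc m)"
  shows "(t - s) * c \<le> lin_interp F s - lin_interp F t"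
proof -
  define m where "m = nat \<lfloor>s\<rfloor>"
  have m: "real m \<le> s" "s < real m + 1"
    using assms(1) unfolding m_def by linarith+
  show ?thesis
  proof (cases "t \<le> real m + 1")
    case True
    then have "lin_interp F s - lin_interp F t = (t - s) * (F m - F (Suc m))"
      using m assms lin_interp_eq[of m s F] lin_interp_eq[of m t F] by (simp add: algebra_simps)
    moreover have "c \<le> F m - F (Suc m)"
      using m assms by (intro slope) auto
    ultimately show ?thesis
      using assms by (simp add: mult_left_mono)
  next
    case False
    then have "lin_interp F s - lin_interp F t
        = (real m + 1 - s) * (F m - F (Suc m)) + (t - real (Suc m)) * (F (Suc m) - F (Suc (Suc m)))"
      using m assms lin_interp_eq[of m s F] lin_interp_eq[of "Suc m" t F] by (simp add: algebra_simps)
    moreover have "c \<le> F m - F (Suc m)" "c \<le> F (Suc m) - F (Suc (Suc m))"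
      using m assms False by (intro slope; simp)+
    then have "(real m + 1 - s) * c \<le> (real m + 1 - s) * (F m - F (Suc m))"
      "(t - real (Suc m)) * c \<le> (t - real (Suc m)) * (F (Suc m) - F (Suc (Suc m)))"
      using m False by (intro mult_left_mono; simp)+
    ultimately show ?thesis
      by (simp add: algebra_simps)
  qed
qed

definition exp_remainder :: "real \<Rightarrow> nat \<Rightarrow> real" where
  "exp_remainder x m = exp x - (\<Sum>i<m. x ^ i / fact i)"

lemma exp_remainder_nonneg:
  assumes "0 \<le> x"
  shows "0 \<le> exp_remainder x m"
proof -
  have "(\<Sum>i<m. inverse (fact i) * x ^ i) \<le> (\<Sum>i. inverse (fact i) * x ^ i)"
    using assms by (intro sum_le_suminf[OF summable_exp]) auto
  then have "(\<Sum>i<m. x ^ i / fact i) \<le> exp x"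
    by (simp add: exp_def divide_inverse mult.commute)
  then show ?thesis
    by (simp add: exp_remainder_def)
qed

definition exp_tail_interp :: "real \<Rightarrow> real \<Rightarrow> real" where
  "exp_tail_interp x u = lin_interp (\<lambda>m. x^2 * exp_remainder x m) (u - 1)"

lemma exp_tail_interp_nonneg:
  assumes "0 \<le> x" "1 \<le> u"
  shows "0 \<le> exp_tail_interp x u"
  unfolding exp_tail_interp_def using assms
  by (intro lin_interp_nonneg mult_nonneg_nonneg exp_remainder_nonneg) auto

lemma exp_tail_interp_eq:
  assumes "1 \<le> u" "u \<le> 2"
  shows "exp_tail_interp x u = x^2 * exp x - (u - 1) * x^2"
  using lin_interp_eq[of 0 "u - 1" "\<lambda>m. x^2 * exp_remainder x m"] assms
  by (simp add: exp_tail_interp_def exp_remainder_def algebra_simps)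

lemma Mittag_Leffler_tail_term_le:
  fixes x g s :: real
  assumes "1 \<le> x" "0 < g" "g \<le> 1" "1 \<le> s" "2 \<le> s + g"
  shows "g * (x powr s / Gamma (s + g)) \<le> exp_tail_interp x s - exp_tail_interp x (s + g)"
proof -
  have "(s + g - 1 - (s - 1)) * (x powr s / Gamma (s + g))
      \<le> lin_interp (\<lambda>m. x^2 * exp_remainder x m) (s - 1)
        - lin_interp (\<lambda>m. x^2 * exp_remainder x m) (s + g - 1)"
  proof (rule lin_interp_diff_ge)
    fix m assume m: "real m \<le> s + g - 1" "s - 1 \<le> real m + 1"
    have "x powr s \<le> x powr real (m + 2)"
      using m assms by (intro powr_mono) auto
    also have "\<dots> = x ^ (m + 2)"
      using assms by (intro powr_realpow) auto
    finally have "x powr s / Gamma (s + g) \<le> x ^ (m + 2) / fact m"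
      using m assms fact_le_Gamma_real[of m "s + g"] by (intro frac_le) auto
    also have "\<dots> = x^2 * (x ^ m / fact m)"
      by (simp add: power_add power2_eq_square)
    also have "\<dots> = x^2 * exp_remainder x m - x^2 * exp_remainder x (Suc m)"
      by (simp add: exp_remainder_def right_diff_distrib[symmetric])
    finally show "x powr s / Gamma (s + g)
        \<le> x^2 * exp_remainder x m - x^2 * exp_remainder x (Suc m)" .
  qed (use assms in auto)
  then show ?thesis
    unfolding exp_tail_interp_def by (simp add: algebra_simps)
qed

lemma Mittag_Leffler_tail_sum_le:
  fixes x g :: real
  assumes "1 \<le> x" "0 < g" "g \<le> 1" "real N * g \<le> 2" "2 \<le> (real N + 1) * g"
  shows "(\<Sum>n<K. g * (x powr (real (N + n) * g) / Gamma (real (Suc (N + n)) * g)))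
    \<le> x^2 * exp x - (real N * g - 1) * x^2"
proof -
  define P where "P n = exp_tail_interp x (real (N + n) * g)" for n
  have step: "real (N + n) * g + g = real (N + Suc n) * g" for n
    by (simp add: algebra_simps)
  have "(real N + 1) * g = real N * g + g"
    by (simp add: algebra_simps)
  then have N_ge: "1 \<le> real N * g"
    using assms by linarith
  have ge_N: "real N * g \<le> real (N + n) * g" for n
    using assms by (intro mult_right_mono) auto
  have "(\<Sum>n<K. g * (x powr (real (N + n) * g) / Gamma (real (Suc (N + n)) * g)))
      \<le> (\<Sum>n<K. P n - P (Suc n))"
  proof (rule sum_mono)
    fix n
    have "1 \<le> real (N + n) * g" "2 \<le> real (N + n) * g + g"
      using ge_N[of n] N_ge \<open>(real N + 1) * g = real N * g + g\<close> assms by linarith+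
    then show "g * (x powr (real (N + n) * g) / Gamma (real (Suc (N + n)) * g)) \<le> P n - P (Suc n)"
      using Mittag_Leffler_tail_term_le[of x g "real (N + n) * g"] assms
      unfolding P_def step by simp
  qed
  also have "\<dots> = P 0 - P K"
    by (rule sum_lessThan_telescope')
  also have "\<dots> \<le> P 0"
  proof -
    have "1 \<le> real (N + K) * g"
      using ge_N[of K] N_ge by linarith
    then show ?thesis
      using exp_tail_interp_nonneg[of x "real (N + K) * g"] assms unfolding P_def by simp
  qed
  also have "\<dots> = x^2 * exp x - (real N * g - 1) * x^2"
    unfolding P_def using exp_tail_interp_eq N_ge assms by simp
  finally show ?thesis .
qed

lemma Mittag_Leffler_head_sum_le:
  fixes x g :: real
  assumes "1 \<le> x" "0 < g" "g < 1"
  defines "N \<equiv> nat \<lfloor>2 / g\<rfloor>"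
  shows "g * (\<Sum>n<N. x powr (real n * g) / Gamma (real (Suc n) * g))
    \<le> x powr (2 - g) * (1 + (real N - 1) * g)"
proof -
  have N: "real N * g \<le> 2"
    using nat_floor_divide_bounds[of g 2] assms(2) unfolding N_def by auto
  have "x powr (real n * g) / Gamma (real (Suc n) * g)
      \<le> x powr (2 - g) * (1 / Gamma (real (Suc n) * g))" if "n < N" for n
  proof -
    have "real (Suc n) * g \<le> real N * g"
      using that assms(2) by (intro mult_right_mono) auto
    then have "x powr (real n * g) \<le> x powr (2 - g)"
      using N assms(1) by (intro powr_mono) (auto simp: algebra_simps)
    then show ?thesis
      using assms(2) by (simp add: divide_right_mono)
  qed
  then have "(\<Sum>n<N. x powr (real n * g) / Gamma (real (Suc n) * g))
      \<le> (\<Sum>n<N. x powr (2 - g) * (1 / Gamma (real (Suc n) * g)))"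
    by (intro sum_mono) simp
  then have "(\<Sum>n<N. x powr (real n * g) / Gamma (real (Suc n) * g))
      \<le> x powr (2 - g) * (\<Sum>n<N. 1 / Gamma (real (Suc n) * g))"
    by (simp add: sum_distrib_left)
  then have "g * (\<Sum>n<N. x powr (real n * g) / Gamma (real (Suc n) * g))
      \<le> x powr (2 - g) * (g * (\<Sum>n<N. 1 / Gamma (real (Suc n) * g)))"
    using assms(2) mult_left_mono by (fastforce simp: mult.left_commute)
  also have "\<dots> \<le> x powr (2 - g) * (1 + (real N - 1) * g)"
    using inverse_Gamma_sum_le[of g] assms(2,3) unfolding N_def by (intro mult_left_mono) auto
  finally show ?thesis .
qed

lemma Mittag_Leffler_partial_sum_le_powr:
  fixes x g :: real
  assumes "1 \<le> x" "0 < g" "g < 1"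
  shows "g * (\<Sum>n<K. x powr (real n * g) / Gamma (real (Suc n) * g))
    \<le> (2 - g) * x powr (2 - g) + x^2 * exp x"
proof -
  define f where "f n = x powr (real n * g) / Gamma (real (Suc n) * g)" for n
  define N where "N = nat \<lfloor>2 / g\<rfloor>"
  have N: "real N * g \<le> 2" "2 < (real N + 1) * g"
    using nat_floor_divide_bounds[of g 2] assms unfolding N_def by auto
  have "(\<Sum>n<K. f n) \<le> (\<Sum>n<N + K. f n)"
    using assms by (intro sum_mono2) (auto simp: f_def)
  also have "\<dots> = (\<Sum>n<N. f n) + (\<Sum>n<K. f (N + n))"
    by (induction K) simp_all
  finally have "g * (\<Sum>n<K. f n) \<le> g * ((\<Sum>n<N. f n) + (\<Sum>n<K. f (N + n)))"
    using assms by (intro mult_left_mono) auto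
  then have "g * (\<Sum>n<K. f n) \<le> g * (\<Sum>n<N. f n) + (\<Sum>n<K. g * f (N + n))"
    by (simp add: distrib_left sum_distrib_left)
  moreover have "g * (\<Sum>n<N. f n) \<le> x powr (2 - g) * (1 + (real N - 1) * g)"
    using Mittag_Leffler_head_sum_le[OF assms] unfolding f_def N_def .
  moreover have "(\<Sum>n<K. g * f (N + n)) \<le> x^2 * exp x - (real N * g - 1) * x^2"
    using Mittag_Leffler_tail_sum_le[of x g N K] N assms unfolding f_def by (simp add: algebra_simps)
  moreover have "(real N * g - 1) * x powr (2 - g) \<le> (real N * g - 1) * x^2"
  proof -
    have "x powr (2 - g) \<le> x powr 2"
      using assms by (intro powr_mono) auto
    then show ?thesis
      using N assms by (intro mult_left_mono) (auto simp: algebra_simps)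
  qed
  ultimately show ?thesis
    unfolding f_def by (simp add: algebra_simps)
qed

lemma Mittag_Leffler_partial_sum_le:
  fixes \<alpha> g :: real
  assumes "1 \<le> \<alpha>" "0 < g" "g < 1"
  shows "(\<Sum>n<K. \<alpha> ^ n / Gamma (real (Suc n) * g))
    \<le> (2 - g) / g * \<alpha> powr ((2 - g) / g) + \<alpha> powr (2 / g) * exp (\<alpha> powr (1 / g)) / g"
proof -
  define x where "x = \<alpha> powr (1 / g)"
  have x: "1 \<le> x"
    using assms unfolding x_def by (auto intro: ge_one_powr_ge_zero)
  have x_powr: "x powr c = \<alpha> powr (c / g)" for c
    unfolding x_def by (simp add: powr_powr)
  have x_pow: "x powr (real n * g) = \<alpha> ^ n" for n
    using assms unfolding x_powr by (simp add: powr_realpow)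
  have x_square: "x^2 = \<alpha> powr (2 / g)"
    using x_powr[of 2] x powr_numeral[of x "num.Bit0 num.One"] by simp
  have "g * (\<Sum>n<K. \<alpha> ^ n / Gamma (real (Suc n) * g))
      \<le> (2 - g) * \<alpha> powr ((2 - g) / g) + \<alpha> powr (2 / g) * exp (\<alpha> powr (1 / g))"
    using Mittag_Leffler_partial_sum_le_powr[OF x assms(2,3), of K]
    unfolding x_pow unfolding x_powr x_square unfolding x_def .
  then show ?thesis
    using assms(2) by (simp add: pos_le_divide_eq field_simps)
qed

theorem lemmaA3:
  fixes \<beta> \<alpha> :: real
  assumes "0 < \<beta>" "\<beta> < 1" "\<alpha> \<ge> 1"
  shows "summable (\<lambda>n::nat. \<alpha> ^ n / Gamma (real (Suc n) * (1 - \<beta>))) \<and>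
    (\<Sum>n::nat. \<alpha> ^ n / Gamma (real (Suc n) * (1 - \<beta>)))
      \<le> (\<beta> + 1) / (1 - \<beta>) * \<alpha> powr ((1 + \<beta>) / (1 - \<beta>))
        + \<alpha> powr (2 / (1 - \<beta>)) * exp (\<alpha> powr (1 / (1 - \<beta>))) / (1 - \<beta>)"
proof -
  let ?f = "\<lambda>n. \<alpha> ^ n / Gamma (real (Suc n) * (1 - \<beta>))"
  let ?R = "(\<beta> + 1) / (1 - \<beta>) * \<alpha> powr ((1 + \<beta>) / (1 - \<beta>))
        + \<alpha> powr (2 / (1 - \<beta>)) * exp (\<alpha> powr (1 / (1 - \<beta>))) / (1 - \<beta>)"
  have partial: "(\<Sum>n<K. ?f n) \<le> ?R" for K
    using Mittag_Leffler_partial_sum_le[of \<alpha> "1 - \<beta>" K] assms by (simp add: add.commute)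
  have "summable ?f"
    using assms by (intro summableI_nonneg_bounded[OF _ partial]) simp
  moreover have "suminf ?f \<le> ?R"
    by (rule suminf_le_const[OF \<open>summable ?f\<close> partial])
  ultimately show ?thesis ..
qed

end
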